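(* Let $n\ge1$, $m\ge1$, $p>1$, and let $u=(u_1,\dots,u_m)$ be a smooth stable solution of $\Delta^2u_i=|u|^{p-1}u_i$ in $\mathbb{R}^n$, $i=1,\dots,m$. Set $w=(w_i)_{i=1}^m$ with $w_i=\Delta u_i$. Then there is a constant $C>0$ such that for every $\zeta\in C_c^\infty(\mathbb{R}^n)$, $$\int_{\mathbb{R}^n}(|w|^2+|u|^{p+1})\zeta^2\le C\int_{\mathbb{R}^n}|u|^2\big[|\nabla\Delta\zeta||\nabla\zeta|+|\Delta\zeta|^2+|\Delta(|\nabla\zeta|^2)|\big]+C\int_{\mathbb{R}^n}|u||w||\nabla\zeta|^2.$$
   Context: $|u|=(\sum_iu_i^2)^{1/2}$, $|w|=(\sum_iw_i^2)^{1/2}$. Stable means: $\sum_i\int|u|^{p-1}\phi_i^2+(p-1)\sum_{i,j}\int|u|^{p-3}u_iu_j\phi_i\phi_j\le\sum_i\int|\Delta\phi_i|^2$ for all $\phi_i\in C_c^\infty(\mathbb{R}^n)$. *)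

theory Defs
  imports "HOL-Analysis.Analysis"
begin

text \<open>Functions on R^n are modelled as functions on real^'n (n = CARD('n) >= 1).\<close>

definition partial :: "'n::finite \<Rightarrow> (real^'n \<Rightarrow> real) \<Rightarrow> real^'n \<Rightarrow> real" where
  "partial i f x = deriv (\<lambda>t. f (x + t *\<^sub>R axis i 1)) 0"

fun iter_partial :: "'n::finite list \<Rightarrow> (real^'n \<Rightarrow> real) \<Rightarrow> real^'n \<Rightarrow> real" where
  "iter_partial [] f = f"
| "iter_partial (i # is) f = partial i (iter_partial is f)"

definition smooth :: "(real^'n::finite \<Rightarrow> real) \<Rightarrow> bool" where
  "smooth f \<longleftrightarrow> (\<forall>is. continuous_on UNIV (iter_partial is f) \<and>
      (\<forall>i x. (\<lambda>t. iter_partial is f (x + t *\<^sub>R axis i 1)) differentiable (at 0)))"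

definition test_fun :: "(real^'n::finite \<Rightarrow> real) \<Rightarrow> bool" where
  "test_fun f \<longleftrightarrow> smooth f \<and> compact (closure {x. f x \<noteq> 0})"

definition laplacian :: "(real^'n::finite \<Rightarrow> real) \<Rightarrow> real^'n \<Rightarrow> real" where
  "laplacian f x = (\<Sum>i\<in>UNIV. partial i (partial i f) x)"

definition grad :: "(real^'n::finite \<Rightarrow> real) \<Rightarrow> real^'n \<Rightarrow> real^'n" where
  "grad f x = (\<chi> i. partial i f x)"

text \<open>Stability of u = (u_1..u_m), components u x $ i, |u| = norm (u x).\<close>
definition stable :: "real \<Rightarrow> (real^'n::finite \<Rightarrow> real^'m::finite) \<Rightarrow> bool" where
  "stable p u \<longleftrightarrow> (\<forall>\<phi> :: 'm \<Rightarrow> real^'n \<Rightarrow> real. (\<forall>i. test_fun (\<phi> i)) \<longrightarrow>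
     (\<Sum>i\<in>UNIV. (\<integral>x. norm (u x) powr (p - 1) * (\<phi> i x)\<^sup>2 \<partial>lborel))
     + (p - 1) * (\<Sum>i\<in>UNIV. \<Sum>j\<in>UNIV.
          (\<integral>x. norm (u x) powr (p - 3) * (u x $ i) * (u x $ j) * \<phi> i x * \<phi> j x \<partial>lborel))
     \<le> (\<Sum>i\<in>UNIV. (\<integral>x. (laplacian (\<phi> i) x)\<^sup>2 \<partial>lborel)))"

end

theory Submission
  imports Defs
begin

text \<open>Test the stability inequality with \<open>\<phi>\<^sub>i = u\<^sub>i \<zeta>\<close>. Because \<open>\<Delta>\<^sup>2u\<^sub>i = |u|\<^sup>p\<^sup>-\<^sup>1u\<^sub>i\<close>,
  the left-hand side is \<open>p \<integral>|u|\<^sup>p\<^sup>+\<^sup>1\<zeta>\<^sup>2 = p \<Sum>\<^sub>i \<integral>\<Delta>\<^sup>2u\<^sub>i u\<^sub>i\<zeta>\<^sup>2\<close>. Expanding \<open>\<Delta>(u\<^sub>i\<zeta>)\<close> and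
  \<open>\<Delta>(u\<^sub>i\<zeta>\<^sup>2)\<close> by the product rule and integrating the mixed terms by parts shows that
  \<open>\<integral>(\<Delta>(u\<^sub>i\<zeta>))\<^sup>2\<close> exceeds \<open>\<integral>\<Delta>\<^sup>2u\<^sub>i u\<^sub>i\<zeta>\<^sup>2\<close> only by terms in which all derivatives fall on \<open>\<zeta>\<close>
  (weighted by \<open>u\<^sub>i\<^sup>2\<close>) or which are bounded by \<open>\<integral>|u||w||\<nabla>\<zeta>|\<^sup>2\<close>; the key is
  \<open>\<integral>(\<nabla>u\<^sub>i\<cdot>\<nabla>\<zeta>)\<^sup>2 \<le> \<integral>|\<nabla>u\<^sub>i|\<^sup>2|\<nabla>\<zeta>|\<^sup>2\<close>, where \<open>|\<nabla>u\<^sub>i|\<^sup>2\<close> is traded for \<open>u\<^sub>i\<Delta>u\<^sub>i\<close> by parts.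
  This bounds \<open>(p - 1)\<integral>|u|\<^sup>p\<^sup>+\<^sup>1\<zeta>\<^sup>2\<close>; the same identities together with Young's inequality
  bound \<open>\<integral>|w|\<^sup>2\<zeta>\<^sup>2\<close> by \<open>2\<integral>|u|\<^sup>p\<^sup>+\<^sup>1\<zeta>\<^sup>2\<close> plus such remainders.\<close>

section \<open>Partial derivatives and smooth functions\<close>

definition has_partials :: "(real^'n::finite \<Rightarrow> real) \<Rightarrow> bool" where
  "has_partials f \<longleftrightarrow> (\<forall>i x. (\<lambda>t. f (x + t *\<^sub>R axis i 1)) differentiable (at 0))"

definition dot_grad :: "(real^'n::finite \<Rightarrow> real) \<Rightarrow> (real^'n \<Rightarrow> real) \<Rightarrow> real^'n \<Rightarrow> real" where
  "dot_grad f g x = (\<Sum>k\<in>UNIV. partial k f x * partial k g x)"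

lemma smooth_iff_has_partials:
  "smooth f \<longleftrightarrow> (\<forall>is. continuous_on UNIV (iter_partial is f) \<and> has_partials (iter_partial is f))"
  unfolding smooth_def has_partials_def by blast

lemma iter_partial_append_singleton: "iter_partial (is @ [i]) f = iter_partial is (partial i f)"
  by (induction "is") auto

lemma has_real_derivative_partial:
  "has_partials f \<Longrightarrow> ((\<lambda>t. f (x + t *\<^sub>R axis i 1)) has_real_derivative partial i f x) (at 0)"
  unfolding has_partials_def partial_def by (simp add: DERIV_deriv_iff_real_differentiable)

lemma has_partials_intro:
  assumes "\<And>i x. ((\<lambda>t. f (x + t *\<^sub>R axis i 1)) has_real_derivative D i x) (at 0)"
  shows "has_partials f" and "partial i f = D i"
  using assms by (auto simp: has_partials_def partial_def real_differentiable_def DERIV_imp_deriv)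

lemma
  assumes "has_partials f" "has_partials g"
  shows partial_add: "partial i (\<lambda>x. f x + g x) = (\<lambda>x. partial i f x + partial i g x)"
    and has_partials_add: "has_partials (\<lambda>x. f x + g x)"
proof -
  have "((\<lambda>t. f (x + t *\<^sub>R axis i 1) + g (x + t *\<^sub>R axis i 1))
      has_real_derivative partial i f x + partial i g x) (at 0)" for i x
    by (intro DERIV_add has_real_derivative_partial assms)
  then show "partial i (\<lambda>x. f x + g x) = (\<lambda>x. partial i f x + partial i g x)"
    and "has_partials (\<lambda>x. f x + g x)"
    by (rule has_partials_intro)+
qed

lemma
  assumes "has_partials f" "has_partials g"
  shows partial_mult: "partial i (\<lambda>x. f x * g x) = (\<lambda>x. partial i f x * g x + f x * partial i g x)"
    and has_partials_mult: "has_partials (\<lambda>x. f x * g x)"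
proof -
  have "((\<lambda>t. f (x + t *\<^sub>R axis i 1) * g (x + t *\<^sub>R axis i 1))
      has_real_derivative partial i f x * g x + f x * partial i g x) (at 0)" for i x
    using DERIV_mult[OF has_real_derivative_partial[OF assms(1)] has_real_derivative_partial[OF assms(2)]]
    by (simp add: algebra_simps)
  then show "partial i (\<lambda>x. f x * g x) = (\<lambda>x. partial i f x * g x + f x * partial i g x)"
    and "has_partials (\<lambda>x. f x * g x)"
    by (rule has_partials_intro)+
qed

lemma
  shows partial_const: "partial i (\<lambda>x. c) = (\<lambda>x. 0)"
    and has_partials_const: "has_partials (\<lambda>x. c)"
  by (rule has_partials_intro[of _ "\<lambda>i x. 0"], simp)+

lemma iter_partial_add:
  assumes "\<And>ks. length ks < length js \<Longrightarrow> has_partials (iter_partial ks f) \<and> has_partials (iter_partial ks g)"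
  shows "iter_partial js (\<lambda>x. f x + g x) = (\<lambda>x. iter_partial js f x + iter_partial js g x)"
  using assms
proof (induction js)
  case (Cons k ks)
  have "iter_partial ks (\<lambda>x. f x + g x) = (\<lambda>x. iter_partial ks f x + iter_partial ks g x)"
    using Cons.prems by (intro Cons.IH) auto
  then show ?case using Cons.prems[of ks] by (simp add: partial_add)
qed simp

named_theorems smooth_intros

lemma smooth_imp_continuous_on: "smooth f \<Longrightarrow> continuous_on UNIV f"
  unfolding smooth_iff_has_partials by (metis iter_partial.simps(1))

lemma smooth_imp_has_partials: "smooth f \<Longrightarrow> has_partials f"
  unfolding smooth_iff_has_partials by (metis iter_partial.simps(1))

lemma smooth_partial [smooth_intros]: "smooth f \<Longrightarrow> smooth (partial i f)"
  unfolding smooth_iff_has_partials by (metis iter_partial_append_singleton)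

lemma smooth_add [smooth_intros]:
  assumes "smooth f" "smooth g"
  shows "smooth (\<lambda>x. f x + g x)"
proof -
  have iter: "iter_partial is (\<lambda>x. f x + g x) = (\<lambda>x. iter_partial is f x + iter_partial is g x)" for "is"
    using assms by (intro iter_partial_add) (auto simp: smooth_iff_has_partials)
  show ?thesis
    using assms unfolding smooth_iff_has_partials iter by (auto intro: continuous_on_add has_partials_add)
qed

lemma smooth_const [smooth_intros]: "smooth (\<lambda>x. c)"
proof -
  have iter: "iter_partial is (\<lambda>x. c) = (\<lambda>x. if is = [] then c else 0)" for "is"
    by (induction "is") (auto simp: partial_const)
  show ?thesis unfolding smooth_iff_has_partials iter by (simp add: has_partials_const)
qed

lemma smooth_mult [smooth_intros]:
  assumes "smooth f" "smooth g"
  shows "smooth (\<lambda>x. f x * g x)"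
proof -
  \<comment> \<open>\<open>\<partial>\<^sub>i(fg) = \<partial>\<^sub>if g + f \<partial>\<^sub>ig\<close> has one derivative less on smooth factors, so induct on the
    number of derivatives with both factors generalised.\<close>
  have "continuous_on UNIV (iter_partial is (\<lambda>x. f x * g x)) \<and> has_partials (iter_partial is (\<lambda>x. f x * g x))"
    if "smooth f" "smooth g" for "is" and f g :: "real^'n \<Rightarrow> real"
    using that
  proof (induction "length is" arbitrary: "is" f g rule: less_induct)
    case less
    show ?case
    proof (cases "is" rule: rev_cases)
      case Nil
      then show ?thesis
        using less.prems[THEN smooth_imp_continuous_on] less.prems[THEN smooth_imp_has_partials]
        by (auto intro!: continuous_intros has_partials_mult)
    next
      case (snoc js i)
      have IH: "continuous_on UNIV (iter_partial ks (\<lambda>x. f' x * g' x)) \<and> has_partials (iter_partial ks (\<lambda>x. f' x * g' x))"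
        if "length ks \<le> length js" "smooth f'" "smooth g'" for ks and f' g' :: "real^'n \<Rightarrow> real"
        using less.hyps that snoc by simp
      have "has_partials (iter_partial ks (\<lambda>x. partial i f x * g x))
          \<and> has_partials (iter_partial ks (\<lambda>x. f x * partial i g x))" if "length ks < length js" for ks
        using IH[of ks "partial i f" g] IH[of ks f "partial i g"] that less.prems by (simp add: smooth_partial)
      then have "iter_partial is (\<lambda>x. f x * g x)
          = (\<lambda>x. iter_partial js (\<lambda>x. partial i f x * g x) x + iter_partial js (\<lambda>x. f x * partial i g x) x)"
        unfolding snoc iter_partial_append_singleton
          partial_mult[OF less.prems[THEN smooth_imp_has_partials]]
        by (intro iter_partial_add)
      moreover have "continuous_on UNIV (iter_partial js (\<lambda>x. partial i f x * g x))
          \<and> has_partials (iter_partial js (\<lambda>x. partial i f x * g x))"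
        using IH[of js "partial i f" g] less.prems by (simp add: smooth_partial)
      moreover have "continuous_on UNIV (iter_partial js (\<lambda>x. f x * partial i g x))
          \<and> has_partials (iter_partial js (\<lambda>x. f x * partial i g x))"
        using IH[of js f "partial i g"] less.prems by (simp add: smooth_partial)
      ultimately show ?thesis by (simp add: continuous_on_add has_partials_add)
    qed
  qed
  from this[OF assms] show ?thesis unfolding smooth_iff_has_partials by blast
qed

lemma smooth_sum [smooth_intros]:
  assumes "\<And>j. smooth (F j)"
  shows "smooth (\<lambda>x. \<Sum>j\<in>A. F j x)"
proof (cases "finite A")
  case True then show ?thesis
    by (induction A rule: finite_induct) (auto intro: smooth_add smooth_const assms)
qed (simp add: smooth_const)

lemma smooth_diff [smooth_intros]:
  assumes "smooth f" "smooth g"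
  shows "smooth (\<lambda>x. f x - g x)"
  using smooth_add[OF assms(1) smooth_mult[OF smooth_const assms(2)], of "-1"] by simp

lemma smooth_minus [smooth_intros]:
  assumes "smooth f"
  shows "smooth (\<lambda>x. - f x)"
  using smooth_diff[OF smooth_const assms, of 0] by simp

lemma smooth_power2 [smooth_intros]: "smooth f \<Longrightarrow> smooth (\<lambda>x. (f x)\<^sup>2)"
  unfolding power2_eq_square by (rule smooth_mult)

lemma smooth_laplacian [smooth_intros]: "smooth f \<Longrightarrow> smooth (laplacian f)"
  unfolding laplacian_def by (intro smooth_intros)

lemma smooth_dot_grad [smooth_intros]: "smooth f \<Longrightarrow> smooth g \<Longrightarrow> smooth (dot_grad f g)"
  unfolding dot_grad_def by (intro smooth_intros)

lemma continuous_on_grad: "smooth f \<Longrightarrow> continuous_on UNIV (grad f)"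
  unfolding grad_def
  by (intro continuous_on_vec_lambda smooth_imp_continuous_on smooth_partial)

lemma dot_grad_commute: "dot_grad f g = dot_grad g f"
  unfolding dot_grad_def by (simp add: fun_eq_iff mult.commute)

lemma dot_grad_eq_inner: "dot_grad f g x = grad f x \<bullet> grad g x"
  unfolding dot_grad_def grad_def inner_vec_def by simp

lemma norm_grad_power2: "(norm (grad f x))\<^sup>2 = dot_grad f f x"
  unfolding dot_grad_eq_inner by (simp add: power2_norm_eq_inner)

lemma dot_grad_mult_left:
  assumes "smooth f" "smooth g"
  shows "dot_grad (\<lambda>x. f x * g x) h x = g x * dot_grad f h x + f x * dot_grad g h x"
  unfolding dot_grad_def partial_mult[OF assms[THEN smooth_imp_has_partials]]
  by (simp add: sum_distrib_left sum.distrib algebra_simps)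

lemma laplacian_mult:
  assumes "smooth f" "smooth g"
  shows "laplacian (\<lambda>x. f x * g x) x = laplacian f x * g x + 2 * dot_grad f g x + f x * laplacian g x"
proof -
  have hp: "has_partials (partial k f)" "has_partials (partial k g)" for k
    using assms by (auto intro: smooth_imp_has_partials smooth_partial)
  have "partial k (partial k (\<lambda>x. f x * g x)) x
      = partial k (partial k f) x * g x + 2 * (partial k f x * partial k g x) + f x * partial k (partial k g) x" for k
    unfolding partial_mult[OF assms[THEN smooth_imp_has_partials]]
    using assms by (simp add: partial_add partial_mult hp has_partials_mult smooth_imp_has_partials)
  then show ?thesis
    unfolding laplacian_def dot_grad_def by (simp add: sum.distrib sum_distrib_left sum_distrib_right)
qed

section \<open>Integration by parts for compactly supported functions\<close>

lemma partial_eq_zero_outside: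
  assumes K: "closed K" and f: "\<And>y. y \<notin> K \<Longrightarrow> f y = 0" and x: "x \<notin> K"
  shows "partial i f x = 0"
proof -
  obtain e where e: "e > 0" "ball x e \<subseteq> - K"
    using K x by (metis open_contains_ball closed_def ComplI)
  have "((\<lambda>t. f (x + t *\<^sub>R axis i 1)) has_real_derivative 0) (at 0)"
  proof (rule has_field_derivative_transform_within[where f="\<lambda>t. 0" and d=e and S=UNIV])
    fix t :: real
    assume "dist t 0 < e"
    then have "x + t *\<^sub>R axis i 1 \<in> ball x e" by (simp add: dist_norm norm_axis_1)
    then show "0 = f (x + t *\<^sub>R axis i 1)" using e f by auto
  qed (use e in auto)
  then show ?thesis unfolding partial_def by (rule DERIV_imp_deriv)
qed

lemma laplacian_eq_zero_outside:
  assumes "closed K" "\<And>y. y \<notin> K \<Longrightarrow> f y = 0" "x \<notin> K"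
  shows "laplacian f x = 0"
  unfolding laplacian_def
  using partial_eq_zero_outside[OF assms(1) partial_eq_zero_outside[OF assms(1,2)] assms(3)] by simp

lemma dot_grad_eq_zero_outside:
  assumes "closed K" "\<And>y. y \<notin> K \<Longrightarrow> f y = 0" "x \<notin> K"
  shows "dot_grad f g x = 0" "dot_grad g f x = 0"
  unfolding dot_grad_def using partial_eq_zero_outside[OF assms] by simp_all

lemma bounded_if_zero_outside_compact:
  fixes f :: "'a::topological_space \<Rightarrow> real"
  assumes "continuous_on UNIV f" "compact K" "\<And>y. y \<notin> K \<Longrightarrow> f y = 0"
  obtains M where "\<And>y. \<bar>f y\<bar> \<le> M"
proof -
  have "compact (f ` K)"
    using assms by (metis compact_continuous_image continuous_on_subset subset_UNIV)
  then obtain B where "\<And>y. y \<in> K \<Longrightarrow> \<bar>f y\<bar> \<le> B"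
    by (metis compact_imp_bounded bounded_real image_eqI)
  then have "\<bar>f y\<bar> \<le> max B 0" for y
    using assms(3) by (cases "y \<in> K") force+
  then show ?thesis by (rule that)
qed

lemma integrable_if_zero_outside_compact:
  fixes f :: "'a::euclidean_space \<Rightarrow> real"
  assumes f: "continuous_on UNIV f" and K: "compact K" and zero: "\<And>y. y \<notin> K \<Longrightarrow> f y = 0"
  shows "integrable lborel f"
proof -
  obtain M where M: "\<And>y. \<bar>f y\<bar> \<le> M" using bounded_if_zero_outside_compact[OF assms] by blast
  show ?thesis
  proof (rule Bochner_Integration.integrable_bound)
    have "emeasure lborel K < \<infinity>" using emeasure_bounded_finite[OF compact_imp_bounded[OF K]] by simp
    then show "integrable lborel (\<lambda>x. M * indicator K x)"
      using K by (intro integrable_mult_right integrable_indicator) (auto simp: borel_compact)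
    show "AE x in lborel. norm (f x) \<le> norm (M * indicator K x)"
    proof (rule AE_I2)
      fix x
      show "norm (f x) \<le> norm (M * indicator K x)"
        using M[of x] zero[of x] by (cases "x \<in> K") auto
    qed
  qed (simp add: f borel_measurable_continuous_onI)
qed

lemma integral_lborel_translate:
  fixes h :: "'a::euclidean_space \<Rightarrow> real"
  assumes "h \<in> borel_measurable borel"
  shows "(\<integral>x. h (x + c) \<partial>lborel) = (\<integral>x. h x \<partial>lborel)"
proof -
  have "(\<integral>x. h x \<partial>lborel) = integral\<^sup>L (distr lborel borel ((+) c)) h"
    by (simp add: lborel_distr_plus)
  also have "\<dots> = (\<integral>x. h (c + x) \<partial>lborel)"
    by (rule integral_distr) (auto simp: assms)
  finally show ?thesis by (simp add: add.commute)
qed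

lemma has_real_derivative_partial_along:
  assumes "has_partials h"
  shows "((\<lambda>s. h (x + s *\<^sub>R axis k 1)) has_real_derivative partial k h (x + s *\<^sub>R axis k 1)) (at s)"
proof -
  have "((\<lambda>t. h (x + (t + s) *\<^sub>R axis k 1)) has_real_derivative partial k h (x + s *\<^sub>R axis k 1)) (at 0)"
    using has_real_derivative_partial[OF assms, of "x + s *\<^sub>R axis k 1" k]
    by (simp add: algebra_simps scaleR_add_left)
  then show ?thesis using DERIV_shift[of "\<lambda>t. h (x + t *\<^sub>R axis k 1)" _ 0 s] by simp
qed

lemma difference_quotient_eq_partial:
  assumes "has_partials h" "0 < t"
  obtains c where "0 < c" "c < t"
    "(h (x + t *\<^sub>R axis k 1) - h x) / t = partial k h (x + c *\<^sub>R axis k 1)"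
proof -
  obtain c where "0 < c" "c < t"
    "h (x + t *\<^sub>R axis k 1) - h (x + 0 *\<^sub>R axis k 1) = (t - 0) * partial k h (x + c *\<^sub>R axis k 1)"
    using MVT2[OF assms(2), of "\<lambda>s. h (x + s *\<^sub>R axis k 1)" "\<lambda>s. partial k h (x + s *\<^sub>R axis k 1)"]
      has_real_derivative_partial_along[OF assms(1)] by blast
  with assms(2) show ?thesis by (intro that) (auto simp: field_simps)
qed

lemma tendsto_difference_quotient_partial:
  assumes "has_partials h"
  shows "(\<lambda>n. (h (x + inverse (Suc n) *\<^sub>R axis k 1) - h x) / inverse (Suc n)) \<longlonglongrightarrow> partial k h x"
proof -
  have "((\<lambda>s. (h (x + s *\<^sub>R axis k 1) - h x) / s) \<longlongrightarrow> partial k h x) (at 0)"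
    using has_real_derivative_partial_along[OF assms, of x k 0] unfolding DERIV_def by simp
  moreover have "filterlim (\<lambda>n. inverse (real (Suc n))) (at 0) sequentially"
    unfolding filterlim_at using LIMSEQ_inverse_real_of_nat by auto
  ultimately show ?thesis by (rule filterlim_compose)
qed

lemma integral_difference_quotient_eq_zero:
  fixes h :: "'a::euclidean_space \<Rightarrow> real"
  assumes h: "continuous_on UNIV h" and K: "compact K" and zero: "\<And>y. y \<notin> K \<Longrightarrow> h y = 0"
  shows "(\<integral>x. (h (x + c) - h x) / t \<partial>lborel) = 0"
proof -
  have "integrable lborel h" by (rule integrable_if_zero_outside_compact[OF h K zero])
  moreover have "integrable lborel (\<lambda>x. h (x + c))"
  proof (rule integrable_if_zero_outside_compact)
    show "continuous_on UNIV (\<lambda>x. h (x + c))"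
      by (intro continuous_on_compose2[OF h] continuous_intros) auto
    show "compact ((\<lambda>y. - c + y) ` K)" using K by (rule compact_translation)
    show "h (y + c) = 0" if "y \<notin> (\<lambda>y. - c + y) ` K" for y
      using that zero[of "y + c"] image_eqI[of y "\<lambda>y. - c + y" "y + c" K] by auto
  qed
  moreover have "h \<in> borel_measurable borel" using h by (rule borel_measurable_continuous_onI)
  ultimately show ?thesis using integral_lborel_translate[of h c] by simp
qed

text \<open>The integral of \<open>\<partial>\<^sub>k h\<close> is the limit of the integrals
  of difference quotients, which vanish by translation invariance of Lebesgue measure.\<close>

lemma integral_partial_eq_zero:
  fixes h :: "real^'n::finite \<Rightarrow> real"
  assumes h: "smooth h" and K: "compact K" and zero: "\<And>y. y \<notin> K \<Longrightarrow> h y = 0"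
  shows "(\<integral>x. partial k h x \<partial>lborel) = 0"
proof -
  define e :: "real^'n" where "e = axis k 1"
  define S where "S = {y + z |y z. y \<in> K \<and> z \<in> cball (0::real^'n) 1}"
  define t :: "nat \<Rightarrow> real" where "t n = inverse (real (Suc n))" for n
  define q where "q n x = (h (x + t n *\<^sub>R e) - h x) / t n" for n x
  have t: "0 < t n" "t n \<le> 1" for n by (auto simp: t_def field_simps)
  have hc: "continuous_on UNIV h" and hp: "has_partials h" and pc: "continuous_on UNIV (partial k h)"
    using h by (auto intro: smooth_imp_continuous_on smooth_imp_has_partials smooth_partial)
  obtain M where M: "\<And>y. \<bar>partial k h y\<bar> \<le> M"
    using bounded_if_zero_outside_compact[OF pc K partial_eq_zero_outside[OF compact_imp_closed[OF K] zero]]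
    by blast
  have shift_zero: "h (x + s *\<^sub>R e) = 0" if "x \<notin> S" "\<bar>s\<bar> \<le> 1" for x s
  proof (rule zero, rule notI)
    assume "x + s *\<^sub>R e \<in> K"
    moreover have "- (s *\<^sub>R e) \<in> cball 0 1" using that(2) by (simp add: e_def norm_axis_1)
    ultimately have "(x + s *\<^sub>R e) + - (s *\<^sub>R e) \<in> S" unfolding S_def by blast
    then show False using that(1) by simp
  qed
  have q_bound: "norm (q n x) \<le> M * indicator S x" for n x
  proof (cases "x \<in> S")
    case True
    obtain c where "q n x = partial k h (x + c *\<^sub>R e)"
      using difference_quotient_eq_partial[OF hp t(1)] unfolding q_def e_def by metis
    then show ?thesis using M True by simp
  next
    case False
    then show ?thesis using shift_zero[OF False, of 0] shift_zero[OF False, of "t n"] t[of n] by (simp add: q_def)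
  qed
  have S: "compact S" unfolding S_def by (intro compact_sums K compact_cball)
  then have "integrable lborel (\<lambda>x. M * indicator S x)"
    using emeasure_bounded_finite[OF compact_imp_bounded[OF S]]
    by (intro integrable_mult_right integrable_indicator) (auto simp: borel_compact)
  moreover have "h \<in> borel_measurable borel" using hc by (rule borel_measurable_continuous_onI)
  then have "q n \<in> borel_measurable lborel" for n
    unfolding q_def by measurable
  ultimately have "(\<lambda>n. \<integral>x. q n x \<partial>lborel) \<longlonglongrightarrow> (\<integral>x. partial k h x \<partial>lborel)"
    using pc q_bound tendsto_difference_quotient_partial[OF hp] unfolding q_def t_def e_def
    by (intro integral_dominated_convergence[where w="\<lambda>x. M * indicator S x"])
       (auto simp: borel_measurable_continuous_onI)
  moreover have "(\<integral>x. q n x \<partial>lborel) = 0" for n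
    unfolding q_def by (rule integral_difference_quotient_eq_zero[OF hc K zero])
  ultimately show ?thesis by (simp add: LIMSEQ_const_iff)
qed

lemma integral_partial_mult:
  assumes f: "smooth f" and g: "smooth g" and K: "compact K" and zero: "\<And>y. y \<notin> K \<Longrightarrow> g y = 0"
  shows "(\<integral>x. partial k f x * g x \<partial>lborel) = - (\<integral>x. f x * partial k g x \<partial>lborel)"
proof -
  have "integrable lborel (\<lambda>x. partial k f x * g x)"
    using zero by (intro integrable_if_zero_outside_compact[OF _ K] smooth_imp_continuous_on smooth_intros f g) auto
  moreover have "integrable lborel (\<lambda>x. f x * partial k g x)"
    using partial_eq_zero_outside[OF compact_imp_closed[OF K] zero]
    by (intro integrable_if_zero_outside_compact[OF _ K] smooth_imp_continuous_on smooth_intros f g) auto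
  moreover have "(\<integral>x. partial k (\<lambda>x. f x * g x) x \<partial>lborel) = 0"
    using zero by (intro integral_partial_eq_zero[OF _ K] smooth_intros f g) auto
  ultimately show ?thesis
    by (simp add: partial_mult[OF f[THEN smooth_imp_has_partials] g[THEN smooth_imp_has_partials]])
qed

lemma integral_mult_laplacian:
  fixes f g :: "real^'n::finite \<Rightarrow> real"
  assumes f: "smooth f" and g: "smooth g" and K: "compact K"
    and zero: "(\<forall>y. y \<notin> K \<longrightarrow> f y = 0) \<or> (\<forall>y. y \<notin> K \<longrightarrow> g y = 0)"
  shows "(\<integral>x. f x * laplacian g x \<partial>lborel) = - (\<integral>x. dot_grad f g x \<partial>lborel)"
proof -
  have Kc: "closed K" using K by (rule compact_imp_closed)
  have products_zero: "f y * partial k (partial k g) y = 0" "partial k f y * partial k g y = 0"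
    if "y \<notin> K" for k y
    using zero partial_eq_zero_outside[OF Kc, of f] partial_eq_zero_outside[OF Kc, of g]
      partial_eq_zero_outside[OF Kc partial_eq_zero_outside[OF Kc, of g]] that
    by auto
  have by_parts: "(\<integral>x. f x * partial k (partial k g) x \<partial>lborel) = - (\<integral>x. partial k f x * partial k g x \<partial>lborel)"
    for k
    using zero
  proof
    assume "\<forall>y. y \<notin> K \<longrightarrow> f y = 0"
    then show ?thesis
      using integral_partial_mult[OF smooth_partial[OF g] f K, of k] by (simp add: mult.commute)
  next
    assume "\<forall>y. y \<notin> K \<longrightarrow> g y = 0"
    then show ?thesis
      using integral_partial_mult[OF f smooth_partial[OF g] K, of k] partial_eq_zero_outside[OF Kc, of g] by simp
  qed
  have "integrable lborel (\<lambda>x. f x * partial k (partial k g) x)"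
    "integrable lborel (\<lambda>x. partial k f x * partial k g x)" for k
    using products_zero
    by (intro integrable_if_zero_outside_compact[OF _ K] smooth_imp_continuous_on smooth_intros f g; auto)+
  then show ?thesis
    unfolding laplacian_def dot_grad_def by (simp add: sum_distrib_left by_parts sum_negf)
qed

lemma integral_laplacian_mult_commute:
  fixes f g :: "real^'n::finite \<Rightarrow> real"
  assumes "smooth f" "smooth g" "compact K" "\<And>y. y \<notin> K \<Longrightarrow> g y = 0"
  shows "(\<integral>x. laplacian f x * g x \<partial>lborel) = (\<integral>x. f x * laplacian g x \<partial>lborel)"
  using integral_mult_laplacian[of g f K] integral_mult_laplacian[of f g K] assms
  by (simp add: dot_grad_commute mult.commute)

section \<open>Pointwise identities and inequalities\<close>

lemma dot_grad_square_left:
  assumes "smooth f"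
  shows "dot_grad (\<lambda>x. (f x)\<^sup>2) g x = 2 * f x * dot_grad f g x"
  using dot_grad_mult_left[OF assms assms, of g x] by (simp add: power2_eq_square)

lemma dot_grad_square_right:
  assumes "smooth f"
  shows "dot_grad g (\<lambda>x. (f x)\<^sup>2) x = 2 * f x * dot_grad g f x"
  using dot_grad_square_left[OF assms, of g x] by (simp add: dot_grad_commute)

lemma laplacian_square:
  assumes "smooth f"
  shows "laplacian (\<lambda>x. (f x)\<^sup>2) x = 2 * f x * laplacian f x + 2 * dot_grad f f x"
  using laplacian_mult[OF assms assms, of x] by (simp add: power2_eq_square)

lemma power2_dot_grad_le: "(dot_grad f g x)\<^sup>2 \<le> dot_grad f f x * dot_grad g g x"
  unfolding dot_grad_eq_inner by (rule Cauchy_Schwarz_ineq)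

lemma dot_grad_self_nonneg: "0 \<le> dot_grad f f x"
  unfolding norm_grad_power2[symmetric] by simp

definition cutoff_weight :: "(real^'n::finite \<Rightarrow> real) \<Rightarrow> real^'n \<Rightarrow> real" where
  "cutoff_weight \<zeta> x = norm (grad (laplacian \<zeta>) x) * norm (grad \<zeta> x) + (laplacian \<zeta> x)\<^sup>2
     + \<bar>laplacian (\<lambda>y. (norm (grad \<zeta> y))\<^sup>2) x\<bar>"

lemma cutoff_weight_eq:
  "cutoff_weight \<zeta> x = norm (grad (laplacian \<zeta>) x) * norm (grad \<zeta> x) + (laplacian \<zeta> x)\<^sup>2
     + \<bar>laplacian (dot_grad \<zeta> \<zeta>) x\<bar>"
  unfolding cutoff_weight_def norm_grad_power2 by (simp add: fun_eq_iff)

lemma cutoff_weight_bounds: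
  shows "0 \<le> cutoff_weight \<zeta> x"
    and "laplacian (dot_grad \<zeta> \<zeta>) x \<le> cutoff_weight \<zeta> x"
    and "(laplacian \<zeta> x)\<^sup>2 \<le> cutoff_weight \<zeta> x"
    and "- dot_grad (laplacian \<zeta>) \<zeta> x \<le> cutoff_weight \<zeta> x"
proof -
  have "- dot_grad (laplacian \<zeta>) \<zeta> x \<le> norm (grad (laplacian \<zeta>) x) * norm (grad \<zeta> x)"
    unfolding dot_grad_eq_inner using Cauchy_Schwarz_ineq2[of "grad (laplacian \<zeta>) x" "grad \<zeta> x"] by linarith
  moreover have "0 \<le> norm (grad (laplacian \<zeta>) x) * norm (grad \<zeta> x)" by simp
  ultimately show "0 \<le> cutoff_weight \<zeta> x"
    and "laplacian (dot_grad \<zeta> \<zeta>) x \<le> cutoff_weight \<zeta> x"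
    and "(laplacian \<zeta> x)\<^sup>2 \<le> cutoff_weight \<zeta> x"
    and "- dot_grad (laplacian \<zeta>) \<zeta> x \<le> cutoff_weight \<zeta> x"
    unfolding cutoff_weight_eq by (smt (verit) abs_ge_self zero_le_power2)+
qed

lemma powr_mult_power:
  fixes r :: real
  assumes "0 \<le> r" "0 < n"
  shows "r powr q * r ^ n = r powr (q + real n)"
  using assms by (cases "r = 0") (simp_all add: powr_add powr_realpow)

lemma continuous_on_components_imp_continuous_on:
  assumes "\<And>i. continuous_on S (\<lambda>x. f x $ i)"
  shows "continuous_on S f"
  using continuous_on_vec_lambda[of S "\<lambda>i x. f x $ i", OF assms] by simp

lemma continuous_on_norm_powr:
  assumes "continuous_on S f" "0 < q"
  shows "continuous_on S (\<lambda>x. norm (f x) powr q)"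
  using continuous_on_powr'[OF continuous_on_norm[OF assms(1)] continuous_on_const] assms(2) by auto

lemma norm_power2_eq_sum_components: "(norm (v :: real^'m::finite))\<^sup>2 = (\<Sum>i\<in>UNIV. (v $ i)\<^sup>2)"
  unfolding power2_norm_eq_inner inner_vec_def by (simp add: power2_eq_square)

lemma norm_powr_component_products:
  fixes v :: "real^'m::finite"
  shows "(\<Sum>i\<in>UNIV. \<Sum>j\<in>UNIV. norm v powr (p - 3) * v $ i * v $ j * (v $ i * c) * (v $ j * c))
      = norm v powr (p + 1) * c\<^sup>2"
    and "\<bar>norm v powr (p - 3) * v $ i * v $ j * (v $ i * c) * (v $ j * c)\<bar> \<le> norm v powr (p + 1) * c\<^sup>2"
proof -
  have product: "norm v powr (p - 3) * v $ i * v $ j * (v $ i * c) * (v $ j * c)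
      = norm v powr (p - 3) * c\<^sup>2 * ((v $ i)\<^sup>2 * (v $ j)\<^sup>2)" for i j
    by (simp add: power2_eq_square algebra_simps)
  have "p - 3 + real 4 = p + 1" by simp
  then have norm4: "norm v powr (p - 3) * ((norm v)\<^sup>2 * (norm v)\<^sup>2) = norm v powr (p + 1)"
    using powr_mult_power[of "norm v" 4 "p - 3"] by (simp only: norm_ge_zero zero_less_numeral simp_thms
      flip: power_add) simp
  have "(\<Sum>i\<in>UNIV. \<Sum>j\<in>UNIV. norm v powr (p - 3) * v $ i * v $ j * (v $ i * c) * (v $ j * c))
      = norm v powr (p - 3) * c\<^sup>2 * ((\<Sum>i\<in>UNIV. (v $ i)\<^sup>2) * (\<Sum>j\<in>UNIV. (v $ j)\<^sup>2))"
    unfolding product sum_product by (simp only: sum_distrib_left)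
  also have "\<dots> = norm v powr (p + 1) * c\<^sup>2"
    unfolding norm_power2_eq_sum_components[symmetric] by (simp add: norm4[symmetric] mult_ac)
  finally show "(\<Sum>i\<in>UNIV. \<Sum>j\<in>UNIV. norm v powr (p - 3) * v $ i * v $ j * (v $ i * c) * (v $ j * c))
      = norm v powr (p + 1) * c\<^sup>2" .
  have "(v $ k)\<^sup>2 \<le> (norm v)\<^sup>2" for k
    using power_mono[OF component_le_norm_cart[of v k] abs_ge_zero, of 2] by simp
  then have prod_le: "(v $ i)\<^sup>2 * (v $ j)\<^sup>2 \<le> (norm v)\<^sup>2 * (norm v)\<^sup>2"
    by (intro mult_mono) simp_all
  show "\<bar>norm v powr (p - 3) * v $ i * v $ j * (v $ i * c) * (v $ j * c)\<bar> \<le> norm v powr (p + 1) * c\<^sup>2"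
    unfolding product norm4[symmetric]
    using mult_left_mono[OF prod_le, of "norm v powr (p - 3) * c\<^sup>2"] by (simp add: abs_mult mult_ac)
qed

section \<open>Integral estimates against a fixed cutoff function\<close>

locale cutoff =
  fixes \<zeta> :: "real^'n::finite \<Rightarrow> real" and K :: "(real^'n) set"
  assumes smooth_cutoff: "smooth \<zeta>" and compact_support: "compact K"
    and cutoff_outside [simp]: "\<And>y. y \<notin> K \<Longrightarrow> \<zeta> y = 0"
begin

lemma closed_support: "closed K"
  using compact_support by (rule compact_imp_closed)

lemma laplacian_cutoff_outside [simp]: "y \<notin> K \<Longrightarrow> laplacian \<zeta> y = 0"
  by (rule laplacian_eq_zero_outside[OF closed_support cutoff_outside])

lemma dot_grad_cutoff_outside [simp]:
  "y \<notin> K \<Longrightarrow> dot_grad \<zeta> f y = 0" "y \<notin> K \<Longrightarrow> dot_grad f \<zeta> y = 0"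
  by (rule dot_grad_eq_zero_outside[OF closed_support cutoff_outside]; assumption)+

lemma laplacian_dot_grad_cutoff_outside [simp]: "y \<notin> K \<Longrightarrow> laplacian (dot_grad \<zeta> \<zeta>) y = 0"
  by (rule laplacian_eq_zero_outside[OF closed_support]) simp_all

lemma dot_grad_dot_grad_cutoff_outside [simp]: "y \<notin> K \<Longrightarrow> dot_grad (dot_grad \<zeta> \<zeta>) f y = 0"
  by (rule dot_grad_eq_zero_outside[OF closed_support]) simp_all

lemma cutoff_weight_outside [simp]: "y \<notin> K \<Longrightarrow> cutoff_weight \<zeta> y = 0"
proof -
  assume y: "y \<notin> K"
  have "grad f y = 0" if "\<And>k. partial k f y = 0" for f
    using that by (simp add: grad_def vec_eq_iff)
  moreover have "partial k (laplacian \<zeta>) y = 0" for k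
    by (rule partial_eq_zero_outside[OF closed_support _ y]) simp
  ultimately show ?thesis using y by (simp add: cutoff_weight_eq)
qed

lemma continuous_on_cutoff_weight: "continuous_on UNIV (cutoff_weight \<zeta>)"
  unfolding cutoff_weight_eq[abs_def] using smooth_cutoff
  by (intro continuous_intros continuous_on_grad smooth_imp_continuous_on smooth_intros)

lemma integrable_continuous:
  fixes f :: "real^'n \<Rightarrow> real"
  assumes "continuous_on UNIV f" "\<And>y. y \<notin> K \<Longrightarrow> f y = 0"
  shows "integrable lborel f"
  using assms(1) compact_support assms(2) by (rule integrable_if_zero_outside_compact)

lemma integrable_smooth:
  assumes "smooth f" "\<And>y. y \<notin> K \<Longrightarrow> f y = 0"
  shows "integrable lborel f"
  using smooth_imp_continuous_on[OF assms(1)] assms(2) by (rule integrable_continuous)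

lemma integral_bilaplacian_mult_cutoff_sq:
  assumes a: "smooth a"
  shows "(\<integral>x. laplacian (laplacian a) x * (a x * (\<zeta> x)\<^sup>2) \<partial>lborel)
    = (\<integral>x. (laplacian a x)\<^sup>2 * (\<zeta> x)\<^sup>2 \<partial>lborel)
      + 4 * (\<integral>x. \<zeta> x * laplacian a x * dot_grad a \<zeta> x \<partial>lborel)
      + 2 * (\<integral>x. a x * laplacian a x * \<zeta> x * laplacian \<zeta> x \<partial>lborel)
      + 2 * (\<integral>x. a x * laplacian a x * dot_grad \<zeta> \<zeta> x \<partial>lborel)"
proof -
  have ints: "integrable lborel (\<lambda>x. (laplacian a x)\<^sup>2 * (\<zeta> x)\<^sup>2)"
    "integrable lborel (\<lambda>x. \<zeta> x * laplacian a x * dot_grad a \<zeta> x)"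
    "integrable lborel (\<lambda>x. a x * laplacian a x * \<zeta> x * laplacian \<zeta> x)"
    "integrable lborel (\<lambda>x. a x * laplacian a x * dot_grad \<zeta> \<zeta> x)"
    by (intro integrable_smooth smooth_intros a smooth_cutoff; simp)+
  have "(\<integral>x. laplacian (laplacian a) x * (a x * (\<zeta> x)\<^sup>2) \<partial>lborel)
      = (\<integral>x. laplacian a x * laplacian (\<lambda>x. a x * (\<zeta> x)\<^sup>2) x \<partial>lborel)"
    by (intro integral_laplacian_mult_commute[OF _ _ compact_support] smooth_intros a smooth_cutoff) simp
  also have "\<dots> = (\<integral>x. (laplacian a x)\<^sup>2 * (\<zeta> x)\<^sup>2 + 4 * (\<zeta> x * laplacian a x * dot_grad a \<zeta> x)
      + 2 * (a x * laplacian a x * \<zeta> x * laplacian \<zeta> x) + 2 * (a x * laplacian a x * dot_grad \<zeta> \<zeta> x) \<partial>lborel)"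
    unfolding laplacian_mult[OF a smooth_power2[OF smooth_cutoff]] laplacian_square[OF smooth_cutoff]
      dot_grad_square_right[OF smooth_cutoff]
    by (rule Bochner_Integration.integral_cong) (simp_all add: algebra_simps power2_eq_square)
  finally show ?thesis using ints by simp
qed

lemma integral_laplacian_mult_cutoff_sq:
  assumes a: "smooth a"
  shows "(\<integral>x. (laplacian (\<lambda>y. a y * \<zeta> y) x)\<^sup>2 \<partial>lborel)
    = (\<integral>x. (laplacian a x)\<^sup>2 * (\<zeta> x)\<^sup>2 \<partial>lborel) + 4 * (\<integral>x. (dot_grad a \<zeta> x)\<^sup>2 \<partial>lborel)
      + (\<integral>x. (a x)\<^sup>2 * (laplacian \<zeta> x)\<^sup>2 \<partial>lborel)
      + 4 * (\<integral>x. \<zeta> x * laplacian a x * dot_grad a \<zeta> x \<partial>lborel)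
      + 2 * (\<integral>x. a x * laplacian a x * \<zeta> x * laplacian \<zeta> x \<partial>lborel)
      + 4 * (\<integral>x. a x * laplacian \<zeta> x * dot_grad a \<zeta> x \<partial>lborel)"
proof -
  have ints: "integrable lborel (\<lambda>x. (laplacian a x)\<^sup>2 * (\<zeta> x)\<^sup>2)"
    "integrable lborel (\<lambda>x. (dot_grad a \<zeta> x)\<^sup>2)"
    "integrable lborel (\<lambda>x. (a x)\<^sup>2 * (laplacian \<zeta> x)\<^sup>2)"
    "integrable lborel (\<lambda>x. \<zeta> x * laplacian a x * dot_grad a \<zeta> x)"
    "integrable lborel (\<lambda>x. a x * laplacian a x * \<zeta> x * laplacian \<zeta> x)"
    "integrable lborel (\<lambda>x. a x * laplacian \<zeta> x * dot_grad a \<zeta> x)"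
    by (intro integrable_smooth smooth_intros a smooth_cutoff; simp)+
  have "(\<integral>x. (laplacian (\<lambda>y. a y * \<zeta> y) x)\<^sup>2 \<partial>lborel)
      = (\<integral>x. (laplacian a x)\<^sup>2 * (\<zeta> x)\<^sup>2 + 4 * (dot_grad a \<zeta> x)\<^sup>2 + (a x)\<^sup>2 * (laplacian \<zeta> x)\<^sup>2
        + 4 * (\<zeta> x * laplacian a x * dot_grad a \<zeta> x) + 2 * (a x * laplacian a x * \<zeta> x * laplacian \<zeta> x)
        + 4 * (a x * laplacian \<zeta> x * dot_grad a \<zeta> x) \<partial>lborel)"
    unfolding laplacian_mult[OF a smooth_cutoff]
    by (rule Bochner_Integration.integral_cong) (simp_all add: algebra_simps power2_eq_square)
  then show ?thesis using ints by simp
qed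

lemma integral_cross_term:
  assumes a: "smooth a"
  shows "2 * (\<integral>x. a x * laplacian \<zeta> x * dot_grad a \<zeta> x \<partial>lborel)
    = - (\<integral>x. (a x)\<^sup>2 * (dot_grad (laplacian \<zeta>) \<zeta> x + (laplacian \<zeta> x)\<^sup>2) \<partial>lborel)"
proof -
  have ints: "integrable lborel (\<lambda>x. a x * laplacian \<zeta> x * dot_grad a \<zeta> x)"
    "integrable lborel (\<lambda>x. (a x)\<^sup>2 * dot_grad (laplacian \<zeta>) \<zeta> x)"
    "integrable lborel (\<lambda>x. (a x)\<^sup>2 * (laplacian \<zeta> x)\<^sup>2)"
    by (intro integrable_smooth smooth_intros a smooth_cutoff; simp)+
  have "(\<integral>x. (a x)\<^sup>2 * (laplacian \<zeta> x)\<^sup>2 \<partial>lborel)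
      = (\<integral>x. (a x)\<^sup>2 * laplacian \<zeta> x * laplacian \<zeta> x \<partial>lborel)"
    by (simp add: power2_eq_square mult.assoc)
  also have "\<dots> = - (\<integral>x. dot_grad (\<lambda>x. (a x)\<^sup>2 * laplacian \<zeta> x) \<zeta> x \<partial>lborel)"
    by (intro integral_mult_laplacian[OF _ _ compact_support] smooth_intros a smooth_cutoff) simp
  also have "\<dots> = - (\<integral>x. 2 * (a x * laplacian \<zeta> x * dot_grad a \<zeta> x)
      + (a x)\<^sup>2 * dot_grad (laplacian \<zeta>) \<zeta> x \<partial>lborel)"
    unfolding dot_grad_mult_left[OF smooth_power2[OF a] smooth_laplacian[OF smooth_cutoff]]
      dot_grad_square_left[OF a] by (simp add: algebra_simps)
  also have "\<dots> = - 2 * (\<integral>x. a x * laplacian \<zeta> x * dot_grad a \<zeta> x \<partial>lborel)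
      - (\<integral>x. (a x)\<^sup>2 * dot_grad (laplacian \<zeta>) \<zeta> x \<partial>lborel)"
    using ints by simp
  finally show ?thesis
    using ints by (simp add: distrib_left)
qed

lemma integral_dot_grad_sq_le:
  assumes a: "smooth a"
  shows "(\<integral>x. (dot_grad a \<zeta> x)\<^sup>2 \<partial>lborel)
    \<le> - (\<integral>x. a x * laplacian a x * dot_grad \<zeta> \<zeta> x \<partial>lborel)
      + 1/2 * (\<integral>x. (a x)\<^sup>2 * laplacian (dot_grad \<zeta> \<zeta>) x \<partial>lborel)"
proof -
  have ints: "integrable lborel (\<lambda>x. (dot_grad a \<zeta> x)\<^sup>2)"
    "integrable lborel (\<lambda>x. dot_grad \<zeta> \<zeta> x * dot_grad a a x)"
    "integrable lborel (\<lambda>x. a x * dot_grad (dot_grad \<zeta> \<zeta>) a x)"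
    by (intro integrable_smooth smooth_intros a smooth_cutoff; simp)+
  have "(\<integral>x. (dot_grad a \<zeta> x)\<^sup>2 \<partial>lborel) \<le> (\<integral>x. dot_grad \<zeta> \<zeta> x * dot_grad a a x \<partial>lborel)"
    using ints(1,2) by (rule integral_mono) (metis mult.commute power2_dot_grad_le)
  also have "(\<integral>x. dot_grad \<zeta> \<zeta> x * dot_grad a a x \<partial>lborel)
      = (\<integral>x. dot_grad (\<lambda>x. a x * dot_grad \<zeta> \<zeta> x) a x \<partial>lborel)
        - (\<integral>x. a x * dot_grad (dot_grad \<zeta> \<zeta>) a x \<partial>lborel)"
    unfolding dot_grad_mult_left[OF a smooth_dot_grad[OF smooth_cutoff smooth_cutoff]] using ints by simp
  also have "(\<integral>x. dot_grad (\<lambda>x. a x * dot_grad \<zeta> \<zeta> x) a x \<partial>lborel)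
      = - (\<integral>x. a x * dot_grad \<zeta> \<zeta> x * laplacian a x \<partial>lborel)"
    by (subst integral_mult_laplacian[OF _ _ compact_support]) (auto intro!: smooth_intros a smooth_cutoff)
  also have "(\<integral>x. a x * dot_grad (dot_grad \<zeta> \<zeta>) a x \<partial>lborel)
      = - 1/2 * (\<integral>x. (a x)\<^sup>2 * laplacian (dot_grad \<zeta> \<zeta>) x \<partial>lborel)"
  proof -
    have "(\<integral>x. (a x)\<^sup>2 * laplacian (dot_grad \<zeta> \<zeta>) x \<partial>lborel)
        = - (\<integral>x. dot_grad (\<lambda>x. (a x)\<^sup>2) (dot_grad \<zeta> \<zeta>) x \<partial>lborel)"
      by (intro integral_mult_laplacian[OF _ _ compact_support] smooth_intros a smooth_cutoff) simp
    also have "\<dots> = - 2 * (\<integral>x. a x * dot_grad (dot_grad \<zeta> \<zeta>) a x \<partial>lborel)"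
      unfolding dot_grad_square_left[OF a] by (simp add: dot_grad_commute[of a] mult.assoc)
    finally show ?thesis by simp
  qed
  finally show ?thesis by (simp add: mult.commute mult.left_commute)
qed

lemma integral_cutoff_remainders_le:
  assumes a: "smooth a"
  shows "(\<integral>x. (a x)\<^sup>2 * laplacian (dot_grad \<zeta> \<zeta>) x \<partial>lborel) \<le> (\<integral>x. (a x)\<^sup>2 * cutoff_weight \<zeta> x \<partial>lborel)"
    and "(\<integral>x. (a x)\<^sup>2 * (laplacian \<zeta> x)\<^sup>2 \<partial>lborel) \<le> (\<integral>x. (a x)\<^sup>2 * cutoff_weight \<zeta> x \<partial>lborel)"
    and "- (\<integral>x. (a x)\<^sup>2 * (dot_grad (laplacian \<zeta>) \<zeta> x + (laplacian \<zeta> x)\<^sup>2) \<partial>lborel)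
      \<le> (\<integral>x. (a x)\<^sup>2 * cutoff_weight \<zeta> x \<partial>lborel)"
proof -
  have weight: "integrable lborel (\<lambda>x. (a x)\<^sup>2 * cutoff_weight \<zeta> x)"
    using smooth_imp_continuous_on[OF a]
    by (intro integrable_continuous continuous_intros continuous_on_cutoff_weight) simp_all
  have ints: "integrable lborel (\<lambda>x. (a x)\<^sup>2 * laplacian (dot_grad \<zeta> \<zeta>) x)"
    "integrable lborel (\<lambda>x. (a x)\<^sup>2 * (laplacian \<zeta> x)\<^sup>2)"
    "integrable lborel (\<lambda>x. - ((a x)\<^sup>2 * (dot_grad (laplacian \<zeta>) \<zeta> x + (laplacian \<zeta> x)\<^sup>2)))"
    by (intro integrable_smooth smooth_intros a smooth_cutoff; simp)+
  have bounds: "(a x)\<^sup>2 * laplacian (dot_grad \<zeta> \<zeta>) x \<le> (a x)\<^sup>2 * cutoff_weight \<zeta> x"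
    "(a x)\<^sup>2 * (laplacian \<zeta> x)\<^sup>2 \<le> (a x)\<^sup>2 * cutoff_weight \<zeta> x"
    "- ((a x)\<^sup>2 * (dot_grad (laplacian \<zeta>) \<zeta> x + (laplacian \<zeta> x)\<^sup>2)) \<le> (a x)\<^sup>2 * cutoff_weight \<zeta> x" for x
  proof -
    have "- (dot_grad (laplacian \<zeta>) \<zeta> x + (laplacian \<zeta> x)\<^sup>2) \<le> cutoff_weight \<zeta> x"
      using cutoff_weight_bounds(4)[of \<zeta> x] zero_le_power2[of "laplacian \<zeta> x"] by linarith
    then show "(a x)\<^sup>2 * laplacian (dot_grad \<zeta> \<zeta>) x \<le> (a x)\<^sup>2 * cutoff_weight \<zeta> x"
      "(a x)\<^sup>2 * (laplacian \<zeta> x)\<^sup>2 \<le> (a x)\<^sup>2 * cutoff_weight \<zeta> x"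
      "- ((a x)\<^sup>2 * (dot_grad (laplacian \<zeta>) \<zeta> x + (laplacian \<zeta> x)\<^sup>2)) \<le> (a x)\<^sup>2 * cutoff_weight \<zeta> x"
      using cutoff_weight_bounds(2,3)[of \<zeta> x] mult_left_mono[of _ _ "(a x)\<^sup>2"]
      by (simp_all only: mult_minus_right[symmetric] zero_le_power2)
  qed
  show "(\<integral>x. (a x)\<^sup>2 * laplacian (dot_grad \<zeta> \<zeta>) x \<partial>lborel) \<le> (\<integral>x. (a x)\<^sup>2 * cutoff_weight \<zeta> x \<partial>lborel)"
    using ints(1) weight bounds(1) by (rule integral_mono)
  show "(\<integral>x. (a x)\<^sup>2 * (laplacian \<zeta> x)\<^sup>2 \<partial>lborel) \<le> (\<integral>x. (a x)\<^sup>2 * cutoff_weight \<zeta> x \<partial>lborel)"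
    using ints(2) weight bounds(2) by (rule integral_mono)
  have "(\<integral>x. - ((a x)\<^sup>2 * (dot_grad (laplacian \<zeta>) \<zeta> x + (laplacian \<zeta> x)\<^sup>2)) \<partial>lborel)
      \<le> (\<integral>x. (a x)\<^sup>2 * cutoff_weight \<zeta> x \<partial>lborel)"
    using ints(3) weight bounds(3) by (rule integral_mono)
  then show "- (\<integral>x. (a x)\<^sup>2 * (dot_grad (laplacian \<zeta>) \<zeta> x + (laplacian \<zeta> x)\<^sup>2) \<partial>lborel)
      \<le> (\<integral>x. (a x)\<^sup>2 * cutoff_weight \<zeta> x \<partial>lborel)"
    by simp
qed

lemma integral_laplacian_mult_cutoff_sq_le:
  assumes a: "smooth a"
  shows "(\<integral>x. (laplacian (\<lambda>y. a y * \<zeta> y) x)\<^sup>2 \<partial>lborel)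
    \<le> (\<integral>x. laplacian (laplacian a) x * (a x * (\<zeta> x)\<^sup>2) \<partial>lborel)
      - 6 * (\<integral>x. a x * laplacian a x * dot_grad \<zeta> \<zeta> x \<partial>lborel)
      + 5 * (\<integral>x. (a x)\<^sup>2 * cutoff_weight \<zeta> x \<partial>lborel)"
  using integral_bilaplacian_mult_cutoff_sq[OF a] integral_laplacian_mult_cutoff_sq[OF a]
    integral_cross_term[OF a] integral_dot_grad_sq_le[OF a] integral_cutoff_remainders_le[OF a]
  by linarith

lemma integral_laplacian_sq_mult_cutoff_sq_le:
  assumes a: "smooth a"
  shows "(\<integral>x. (laplacian a x)\<^sup>2 * (\<zeta> x)\<^sup>2 \<partial>lborel)
    \<le> 2 * (\<integral>x. laplacian (laplacian a) x * (a x * (\<zeta> x)\<^sup>2) \<partial>lborel)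
      - 36 * (\<integral>x. a x * laplacian a x * dot_grad \<zeta> \<zeta> x \<partial>lborel)
      + 24 * (\<integral>x. (a x)\<^sup>2 * cutoff_weight \<zeta> x \<partial>lborel)"
proof -
  have ints: "integrable lborel (\<lambda>x. (laplacian a x)\<^sup>2 * (\<zeta> x)\<^sup>2)"
    "integrable lborel (\<lambda>x. (dot_grad a \<zeta> x)\<^sup>2)"
    "integrable lborel (\<lambda>x. (a x)\<^sup>2 * (laplacian \<zeta> x)\<^sup>2)"
    "integrable lborel (\<lambda>x. \<zeta> x * laplacian a x * dot_grad a \<zeta> x)"
    "integrable lborel (\<lambda>x. a x * laplacian a x * \<zeta> x * laplacian \<zeta> x)"
    by (intro integrable_smooth smooth_intros a smooth_cutoff; simp)+
  have "(\<integral>x. - 4 * (\<zeta> x * laplacian a x * dot_grad a \<zeta> x) \<partial>lborel)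
      \<le> (\<integral>x. 1/4 * ((laplacian a x)\<^sup>2 * (\<zeta> x)\<^sup>2) + 16 * (dot_grad a \<zeta> x)\<^sup>2 \<partial>lborel)"
  proof (rule integral_mono)
    show "- 4 * (\<zeta> x * laplacian a x * dot_grad a \<zeta> x)
      \<le> 1/4 * ((laplacian a x)\<^sup>2 * (\<zeta> x)\<^sup>2) + 16 * (dot_grad a \<zeta> x)\<^sup>2" for x
      using zero_le_power2[of "1/2 * laplacian a x * \<zeta> x + 4 * dot_grad a \<zeta> x"]
      by (simp add: power2_eq_square algebra_simps)
  qed (use ints in auto)
  moreover have "(\<integral>x. - 2 * (a x * laplacian a x * \<zeta> x * laplacian \<zeta> x) \<partial>lborel)
      \<le> (\<integral>x. 1/4 * ((laplacian a x)\<^sup>2 * (\<zeta> x)\<^sup>2) + 4 * ((a x)\<^sup>2 * (laplacian \<zeta> x)\<^sup>2) \<partial>lborel)"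
  proof (rule integral_mono)
    show "- 2 * (a x * laplacian a x * \<zeta> x * laplacian \<zeta> x)
      \<le> 1/4 * ((laplacian a x)\<^sup>2 * (\<zeta> x)\<^sup>2) + 4 * ((a x)\<^sup>2 * (laplacian \<zeta> x)\<^sup>2)" for x
      using zero_le_power2[of "1/2 * laplacian a x * \<zeta> x + 2 * a x * laplacian \<zeta> x"]
      by (simp add: power2_eq_square algebra_simps)
  qed (use ints in auto)
  ultimately show ?thesis
    using ints integral_bilaplacian_mult_cutoff_sq[OF a] integral_dot_grad_sq_le[OF a]
      integral_cutoff_remainders_le(1,2)[OF a]
    by simp
qed

lemma sum_integral_component_sq:
  fixes v :: "real^'n \<Rightarrow> real^'m::finite"
  assumes v: "\<And>i. continuous_on UNIV (\<lambda>x. v x $ i)"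
    and f: "continuous_on UNIV f" and f_outside: "\<And>y. y \<notin> K \<Longrightarrow> f y = 0"
  shows "(\<Sum>i\<in>UNIV. \<integral>x. (v x $ i)\<^sup>2 * f x \<partial>lborel) = (\<integral>x. (norm (v x))\<^sup>2 * f x \<partial>lborel)"
proof -
  have "continuous_on UNIV v" by (rule continuous_on_components_imp_continuous_on) (rule v)
  then have "integrable lborel (\<lambda>x. (v x $ i)\<^sup>2 * f x)" for i
    using v f by (intro integrable_continuous continuous_intros) (simp_all add: f_outside)
  then show ?thesis
    by (simp add: norm_power2_eq_sum_components sum_distrib_right)
qed

lemma neg_sum_integral_component_products_le:
  fixes v w :: "real^'n \<Rightarrow> real^'m::finite"
  assumes v: "\<And>i. continuous_on UNIV (\<lambda>x. v x $ i)" and w: "\<And>i. continuous_on UNIV (\<lambda>x. w x $ i)"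
    and f: "continuous_on UNIV f" and f_outside: "\<And>y. y \<notin> K \<Longrightarrow> f y = 0" and f_nonneg: "\<And>x. 0 \<le> f x"
  shows "- (\<Sum>i\<in>UNIV. \<integral>x. v x $ i * w x $ i * f x \<partial>lborel) \<le> (\<integral>x. norm (v x) * norm (w x) * f x \<partial>lborel)"
proof -
  have cv: "continuous_on UNIV v" and cw: "continuous_on UNIV w"
    by (rule continuous_on_components_imp_continuous_on, rule v w)+
  have "integrable lborel (\<lambda>x. v x $ i * w x $ i * f x)" for i
    using cv cw v w f by (intro integrable_continuous continuous_intros) (simp_all add: f_outside)
  then have "- (\<Sum>i\<in>UNIV. \<integral>x. v x $ i * w x $ i * f x \<partial>lborel) = (\<integral>x. - (v x \<bullet> w x) * f x \<partial>lborel)"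
    by (simp add: inner_vec_def sum_distrib_right)
  also have "\<dots> \<le> (\<integral>x. norm (v x) * norm (w x) * f x \<partial>lborel)"
  proof (rule integral_mono)
    show "integrable lborel (\<lambda>x. - (v x \<bullet> w x) * f x)" "integrable lborel (\<lambda>x. norm (v x) * norm (w x) * f x)"
      using cv cw f by (intro integrable_continuous continuous_intros; simp add: f_outside)+
    show "- (v x \<bullet> w x) * f x \<le> norm (v x) * norm (w x) * f x" for x
      using Cauchy_Schwarz_ineq2[of "v x" "w x"] f_nonneg[of x] by (intro mult_right_mono) linarith+
  qed
  finally show ?thesis .
qed

lemma sum_integral_norm_powr_component_sq:
  fixes u :: "real^'n \<Rightarrow> real^'m::finite"
  assumes p: "p > 1" and u: "\<And>i. continuous_on UNIV (\<lambda>x. u x $ i)"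
  shows "(\<Sum>i\<in>UNIV. \<integral>x. (u x $ i)\<^sup>2 * (norm (u x) powr (p - 1) * (\<zeta> x)\<^sup>2) \<partial>lborel)
    = (\<integral>x. norm (u x) powr (p + 1) * (\<zeta> x)\<^sup>2 \<partial>lborel)"
proof -
  have cu: "continuous_on UNIV u"
    by (rule continuous_on_components_imp_continuous_on) (rule u)
  have "continuous_on UNIV (\<lambda>x. norm (u x) powr (p - 1) * (\<zeta> x)\<^sup>2)"
    using p smooth_imp_continuous_on[OF smooth_cutoff]
    by (intro continuous_on_mult continuous_on_norm_powr cu continuous_intros) simp_all
  then have "(\<Sum>i\<in>UNIV. \<integral>x. (u x $ i)\<^sup>2 * (norm (u x) powr (p - 1) * (\<zeta> x)\<^sup>2) \<partial>lborel)
      = (\<integral>x. (norm (u x))\<^sup>2 * (norm (u x) powr (p - 1) * (\<zeta> x)\<^sup>2) \<partial>lborel)"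
    by (rule sum_integral_component_sq[OF u]) simp
  moreover have "p - 1 + real 2 = p + 1" by simp
  then have powr_eq: "norm (u x) powr (p - 1) * (norm (u x))\<^sup>2 = norm (u x) powr (p + 1)" for x
    using powr_mult_power[of "norm (u x)" 2 "p - 1"]
    by (simp only: norm_ge_zero zero_less_numeral simp_thms)
  ultimately show ?thesis
    by (simp flip: powr_eq add: mult_ac)
qed

lemma stable_cutoff_estimate:
  fixes u :: "real^'n \<Rightarrow> real^'m::finite"
  assumes p: "p > 1" and u: "\<And>i. smooth (\<lambda>x. u x $ i)" and stab: "stable p u"
  shows "p * (\<integral>x. norm (u x) powr (p + 1) * (\<zeta> x)\<^sup>2 \<partial>lborel)
    \<le> (\<Sum>i\<in>UNIV. \<integral>x. (laplacian (\<lambda>y. u y $ i * \<zeta> y) x)\<^sup>2 \<partial>lborel)"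
proof -
  define U where "U = (\<integral>x. norm (u x) powr (p + 1) * (\<zeta> x)\<^sup>2 \<partial>lborel)"
  have cu: "continuous_on UNIV u"
    by (rule continuous_on_components_imp_continuous_on, rule smooth_imp_continuous_on, rule u)
  have cpowr: "continuous_on UNIV (\<lambda>x. norm (u x) powr q)" if "q > 0" for q
    using cu that by (rule continuous_on_norm_powr)
  have test: "test_fun (\<lambda>x. u x $ i * \<zeta> x)" for i
  proof -
    define S where "S = {x. u x $ i * \<zeta> x \<noteq> 0}"
    have "closure S \<subseteq> K"
      by (rule closure_minimal[OF _ closed_support]) (metis (mono_tags) S_def cutoff_outside mem_Collect_eq mult_zero_right subsetI)
    then have "compact (closure S)"
      by (metis Int_absorb1 compact_Int_closed compact_support closed_closure)
    then show ?thesis unfolding test_fun_def S_def by (simp add: smooth_mult u smooth_cutoff)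
  qed
  have stable_ineq: "(\<Sum>i\<in>UNIV. \<integral>x. norm (u x) powr (p - 1) * (u x $ i * \<zeta> x)\<^sup>2 \<partial>lborel)
      + (p - 1) * (\<Sum>i\<in>UNIV. \<Sum>j\<in>UNIV. \<integral>x. norm (u x) powr (p - 3) * u x $ i * u x $ j
          * (u x $ i * \<zeta> x) * (u x $ j * \<zeta> x) \<partial>lborel)
      \<le> (\<Sum>i\<in>UNIV. \<integral>x. (laplacian (\<lambda>y. u y $ i * \<zeta> y) x)\<^sup>2 \<partial>lborel)"
    using stab[unfolded stable_def, THEN spec[of _ "\<lambda>i x. u x $ i * \<zeta> x"]] test by blast
  have "(\<Sum>i\<in>UNIV. \<integral>x. norm (u x) powr (p - 1) * (u x $ i * \<zeta> x)\<^sup>2 \<partial>lborel)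
      = (\<Sum>i\<in>UNIV. \<integral>x. (u x $ i)\<^sup>2 * (norm (u x) powr (p - 1) * (\<zeta> x)\<^sup>2) \<partial>lborel)"
    by (simp add: power_mult_distrib mult.commute mult.left_commute)
  also have "\<dots> = U"
    unfolding U_def using p u by (intro sum_integral_norm_powr_component_sq smooth_imp_continuous_on)
  finally have first: "(\<Sum>i\<in>UNIV. \<integral>x. norm (u x) powr (p - 1) * (u x $ i * \<zeta> x)\<^sup>2 \<partial>lborel) = U" .
  have int_U: "integrable lborel (\<lambda>x. norm (u x) powr (p + 1) * (\<zeta> x)\<^sup>2)"
    using p smooth_imp_continuous_on[OF smooth_cutoff]
    by (intro integrable_continuous continuous_intros cpowr) simp_all
  have "integrable lborel (\<lambda>x. norm (u x) powr (p - 3) * u x $ i * u x $ j * (u x $ i * \<zeta> x) * (u x $ j * \<zeta> x))"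
    for i j
  proof (rule Bochner_Integration.integrable_bound[OF int_U])
    have [measurable]: "(\<lambda>x. u x $ i) \<in> borel_measurable lborel" "\<zeta> \<in> borel_measurable lborel"
      "(\<lambda>x. norm (u x)) \<in> borel_measurable lborel" for i
      using u smooth_cutoff continuous_on_norm[OF cu]
      by (auto intro: borel_measurable_continuous_onI smooth_imp_continuous_on)
    show "(\<lambda>x. norm (u x) powr (p - 3) * u x $ i * u x $ j * (u x $ i * \<zeta> x) * (u x $ j * \<zeta> x))
        \<in> borel_measurable lborel"
      by measurable
    show "AE x in lborel. norm (norm (u x) powr (p - 3) * u x $ i * u x $ j * (u x $ i * \<zeta> x) * (u x $ j * \<zeta> x))
        \<le> norm (norm (u x) powr (p + 1) * (\<zeta> x)\<^sup>2)"
      using norm_powr_component_products(2) by (intro AE_I2) (simp add: order_trans[OF _ abs_ge_self])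
  qed
  then have "(\<Sum>i\<in>UNIV. \<Sum>j\<in>UNIV. \<integral>x. norm (u x) powr (p - 3) * u x $ i * u x $ j
      * (u x $ i * \<zeta> x) * (u x $ j * \<zeta> x) \<partial>lborel)
      = (\<integral>x. (\<Sum>i\<in>UNIV. \<Sum>j\<in>UNIV. norm (u x) powr (p - 3) * u x $ i * u x $ j
      * (u x $ i * \<zeta> x) * (u x $ j * \<zeta> x)) \<partial>lborel)"
    by simp
  then have second: "(\<Sum>i\<in>UNIV. \<Sum>j\<in>UNIV. \<integral>x. norm (u x) powr (p - 3) * u x $ i * u x $ j
      * (u x $ i * \<zeta> x) * (u x $ j * \<zeta> x) \<partial>lborel) = U"
    unfolding U_def norm_powr_component_products(1) .
  show ?thesis using stable_ineq unfolding first second U_def[symmetric] by (simp add: algebra_simps)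
qed

lemma weighted_estimates:
  fixes u w :: "real^'n \<Rightarrow> real^'m::finite"
  assumes p: "p > 1" and u: "\<And>i. smooth (\<lambda>x. u x $ i)"
    and eq: "\<And>i x. laplacian (laplacian (\<lambda>y. u y $ i)) x = norm (u x) powr (p - 1) * (u x $ i)"
    and stab: "stable p u" and w: "\<And>i x. w x $ i = laplacian (\<lambda>y. u y $ i) x"
  defines "U \<equiv> \<integral>x. norm (u x) powr (p + 1) * (\<zeta> x)\<^sup>2 \<partial>lborel"
    and "W \<equiv> \<integral>x. (norm (w x))\<^sup>2 * (\<zeta> x)\<^sup>2 \<partial>lborel"
    and "R1 \<equiv> \<integral>x. (norm (u x))\<^sup>2 * cutoff_weight \<zeta> x \<partial>lborel"
    and "R2 \<equiv> \<integral>x. norm (u x) * norm (w x) * (norm (grad \<zeta> x))\<^sup>2 \<partial>lborel"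
  shows "(p - 1) * U \<le> 6 * R2 + 5 * R1" and "W \<le> 2 * U + 36 * R2 + 24 * R1"
proof -
  have cu: "continuous_on UNIV (\<lambda>x. u x $ i)" and cw: "continuous_on UNIV (\<lambda>x. w x $ i)" for i
    using u by (simp_all add: w smooth_imp_continuous_on smooth_laplacian)
  have bilaplacian: "(\<Sum>i\<in>UNIV. \<integral>x. laplacian (laplacian (\<lambda>y. u y $ i)) x * (u x $ i * (\<zeta> x)\<^sup>2) \<partial>lborel) = U"
    unfolding eq U_def sum_integral_norm_powr_component_sq[OF p cu, symmetric]
    by (simp add: power2_eq_square mult_ac)
  have "- (\<Sum>i\<in>UNIV. \<integral>x. u x $ i * laplacian (\<lambda>y. u y $ i) x * dot_grad \<zeta> \<zeta> x \<partial>lborel) \<le> R2"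
    unfolding R2_def norm_grad_power2 w[symmetric] using cu cw
    by (intro neg_sum_integral_component_products_le)
      (simp_all add: smooth_imp_continuous_on smooth_dot_grad smooth_cutoff dot_grad_self_nonneg)
  moreover have "(\<Sum>i\<in>UNIV. \<integral>x. (u x $ i)\<^sup>2 * cutoff_weight \<zeta> x \<partial>lborel) = R1"
    unfolding R1_def by (rule sum_integral_component_sq[OF cu continuous_on_cutoff_weight]) simp
  moreover have "(\<Sum>i\<in>UNIV. \<integral>x. (laplacian (\<lambda>y. u y $ i) x)\<^sup>2 * (\<zeta> x)\<^sup>2 \<partial>lborel) = W"
    unfolding W_def w[symmetric] using smooth_imp_continuous_on[OF smooth_power2[OF smooth_cutoff]]
    by (rule sum_integral_component_sq[OF cw]) simp
  moreover have "p * U \<le> (\<Sum>i\<in>UNIV. \<integral>x. (laplacian (\<lambda>y. u y $ i * \<zeta> y) x)\<^sup>2 \<partial>lborel)"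
    unfolding U_def by (rule stable_cutoff_estimate[OF p u stab])
  moreover have "(\<Sum>i\<in>UNIV. \<integral>x. (laplacian (\<lambda>y. u y $ i * \<zeta> y) x)\<^sup>2 \<partial>lborel)
      \<le> (\<Sum>i\<in>UNIV. \<integral>x. laplacian (laplacian (\<lambda>y. u y $ i)) x * (u x $ i * (\<zeta> x)\<^sup>2) \<partial>lborel)
        - 6 * (\<Sum>i\<in>UNIV. \<integral>x. u x $ i * laplacian (\<lambda>y. u y $ i) x * dot_grad \<zeta> \<zeta> x \<partial>lborel)
        + 5 * (\<Sum>i\<in>UNIV. \<integral>x. (u x $ i)\<^sup>2 * cutoff_weight \<zeta> x \<partial>lborel)"
    using sum_mono[OF integral_laplacian_mult_cutoff_sq_le[OF u]]
    by (simp add: sum.distrib sum_subtractf sum_distrib_left)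
  moreover have "(\<Sum>i\<in>UNIV. \<integral>x. (laplacian (\<lambda>y. u y $ i) x)\<^sup>2 * (\<zeta> x)\<^sup>2 \<partial>lborel)
      \<le> 2 * (\<Sum>i\<in>UNIV. \<integral>x. laplacian (laplacian (\<lambda>y. u y $ i)) x * (u x $ i * (\<zeta> x)\<^sup>2) \<partial>lborel)
        - 36 * (\<Sum>i\<in>UNIV. \<integral>x. u x $ i * laplacian (\<lambda>y. u y $ i) x * dot_grad \<zeta> \<zeta> x \<partial>lborel)
        + 24 * (\<Sum>i\<in>UNIV. \<integral>x. (u x $ i)\<^sup>2 * cutoff_weight \<zeta> x \<partial>lborel)"
    using sum_mono[OF integral_laplacian_sq_mult_cutoff_sq_le[OF u]]
    by (simp add: sum.distrib sum_subtractf sum_distrib_left)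
  ultimately show "(p - 1) * U \<le> 6 * R2 + 5 * R1" and "W \<le> 2 * U + 36 * R2 + 24 * R1"
    unfolding bilaplacian by (simp_all add: algebra_simps)
qed

lemma weighted_bound:
  fixes u w :: "real^'n \<Rightarrow> real^'m::finite"
  assumes p: "p > 1" and u: "\<And>i. smooth (\<lambda>x. u x $ i)"
    and eq: "\<And>i x. laplacian (laplacian (\<lambda>y. u y $ i)) x = norm (u x) powr (p - 1) * (u x $ i)"
    and stab: "stable p u" and w: "\<And>i x. w x $ i = laplacian (\<lambda>y. u y $ i) x"
  shows "(\<integral>x. ((norm (w x))\<^sup>2 + norm (u x) powr (p + 1)) * (\<zeta> x)\<^sup>2 \<partial>lborel)
    \<le> (36 + 18 / (p - 1)) * (\<integral>x. (norm (u x))\<^sup>2 * cutoff_weight \<zeta> x \<partial>lborel)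
      + (36 + 18 / (p - 1)) * (\<integral>x. norm (u x) * norm (w x) * (norm (grad \<zeta> x))\<^sup>2 \<partial>lborel)"
proof -
  define U where "U = (\<integral>x. norm (u x) powr (p + 1) * (\<zeta> x)\<^sup>2 \<partial>lborel)"
  define W where "W = (\<integral>x. (norm (w x))\<^sup>2 * (\<zeta> x)\<^sup>2 \<partial>lborel)"
  define R1 where "R1 = (\<integral>x. (norm (u x))\<^sup>2 * cutoff_weight \<zeta> x \<partial>lborel)"
  define R2 where "R2 = (\<integral>x. norm (u x) * norm (w x) * (norm (grad \<zeta> x))\<^sup>2 \<partial>lborel)"
  have cu: "continuous_on UNIV u" and cw: "continuous_on UNIV w"
    using u by (auto intro!: continuous_on_components_imp_continuous_on
        simp: w smooth_imp_continuous_on smooth_laplacian)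
  have "integrable lborel (\<lambda>x. (norm (w x))\<^sup>2 * (\<zeta> x)\<^sup>2)"
    "integrable lborel (\<lambda>x. norm (u x) powr (p + 1) * (\<zeta> x)\<^sup>2)"
    using p cu cw smooth_imp_continuous_on[OF smooth_cutoff]
    by (intro integrable_continuous continuous_on_mult continuous_on_norm_powr continuous_intros; simp)+
  then have LHS: "(\<integral>x. ((norm (w x))\<^sup>2 + norm (u x) powr (p + 1)) * (\<zeta> x)\<^sup>2 \<partial>lborel) = W + U"
    unfolding W_def U_def by (simp add: distrib_right)
  have "0 \<le> R1" "0 \<le> R2"
    unfolding R1_def R2_def
    by (auto intro!: Bochner_Integration.integral_nonneg mult_nonneg_nonneg cutoff_weight_bounds)
  moreover have "(p - 1) * U \<le> 6 * R2 + 5 * R1" "W \<le> 2 * U + 36 * R2 + 24 * R1"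
    unfolding U_def W_def R1_def R2_def by (rule weighted_estimates[OF p u eq stab w])+
  moreover have "U \<le> 6 * (R2 / (p - 1)) + 5 * (R1 / (p - 1))"
    using calculation(3) p by (simp add: pos_le_divide_eq add_divide_distrib[symmetric] mult.commute)
  moreover have "0 \<le> R1 / (p - 1)" "0 \<le> R2 / (p - 1)"
    using calculation(1,2) p by simp_all
  moreover have "(36 + 18 / (p - 1)) * R1 = 36 * R1 + 18 * (R1 / (p - 1))"
    "(36 + 18 / (p - 1)) * R2 = 36 * R2 + 18 * (R2 / (p - 1))"
    by (simp_all add: distrib_right)
  ultimately show ?thesis
    unfolding LHS R1_def[symmetric] R2_def[symmetric] by linarith
qed

end

lemma weighted_bound_of_test_fun:
  fixes u w :: "real^'n::finite \<Rightarrow> real^'m::finite"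
  assumes p: "p > 1" and u: "\<And>i. smooth (\<lambda>x. u x $ i)"
    and eq: "\<And>i x. laplacian (laplacian (\<lambda>y. u y $ i)) x = norm (u x) powr (p - 1) * (u x $ i)"
    and stab: "stable p u" and w: "\<And>i x. w x $ i = laplacian (\<lambda>y. u y $ i) x"
    and \<zeta>: "test_fun \<zeta>"
  shows "(\<integral>x. ((norm (w x))\<^sup>2 + norm (u x) powr (p + 1)) * (\<zeta> x)\<^sup>2 \<partial>lborel)
    \<le> (36 + 18 / (p - 1)) * (\<integral>x. (norm (u x))\<^sup>2 * (norm (grad (laplacian \<zeta>) x) * norm (grad \<zeta> x)
              + (laplacian \<zeta> x)\<^sup>2 + \<bar>laplacian (\<lambda>y. (norm (grad \<zeta> y))\<^sup>2) x\<bar>) \<partial>lborel)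
      + (36 + 18 / (p - 1)) * (\<integral>x. norm (u x) * norm (w x) * (norm (grad \<zeta> x))\<^sup>2 \<partial>lborel)"
proof -
  interpret cutoff \<zeta> "closure {x. \<zeta> x \<noteq> 0}"
  proof unfold_locales
    show "smooth \<zeta>" "compact (closure {x. \<zeta> x \<noteq> 0})"
      using \<zeta> unfolding test_fun_def by simp_all
    show "\<zeta> y = 0" if "y \<notin> closure {x. \<zeta> x \<noteq> 0}" for y
      using that closure_subset[of "{x. \<zeta> x \<noteq> 0}"] by auto
  qed
  show ?thesis
    using weighted_bound[OF p u eq stab w] unfolding cutoff_weight_def .
qed

theorem lemma3p2:
  fixes u :: "real^'n \<Rightarrow> real^'m" and p :: real
  assumes p: "p > 1"
    and smooth_u: "\<And>i. smooth (\<lambda>x. u x $ i)"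
    and eq: "\<And>i x. laplacian (laplacian (\<lambda>y. u y $ i)) x = norm (u x) powr (p - 1) * (u x $ i)"
    and stab: "stable p u"
  defines "w \<equiv> \<lambda>x. (\<chi> i. laplacian (\<lambda>y. u y $ i) x)"
  shows "\<exists>C>0. \<forall>\<zeta>. test_fun \<zeta> \<longrightarrow>
    (\<integral>x. ((norm (w x))\<^sup>2 + norm (u x) powr (p + 1)) * (\<zeta> x)\<^sup>2 \<partial>lborel)
    \<le> C * (\<integral>x. (norm (u x))\<^sup>2 * (norm (grad (laplacian \<zeta>) x) * norm (grad \<zeta> x)
              + (laplacian \<zeta> x)\<^sup>2 + \<bar>laplacian (\<lambda>y. (norm (grad \<zeta> y))\<^sup>2) x\<bar>) \<partial>lborel)
      + C * (\<integral>x. norm (u x) * norm (w x) * (norm (grad \<zeta> x))\<^sup>2 \<partial>lborel)"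
proof -
  have w: "w x $ i = laplacian (\<lambda>y. u y $ i) x" for i x
    by (simp add: w_def)
  have "18 / (p - 1) > 0" using p by simp
  then have "36 + 18 / (p - 1) > 0" by linarith
  then show ?thesis
    using weighted_bound_of_test_fun[OF p smooth_u eq stab w] by blast
qed

end
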